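(* For any $n\in\mathbb{N}$, the monoid $\mathrm{lps}_n$ has finite derivation type.
   Context: Let $\mathcal{A}_n=\{1<2<\cdots<n\}$. An lPS tableau is a finite (possibly empty) sequence of nonempty bottom-justified columns of boxes filled with positive integers, such that the entries of each column are strictly decreasing from top to bottom and the bottom entries of the columns form a weakly increasing sequence from left to right. Right insertion of a symbol $a$ into an lPS tableau $B$: if $a$ is greater than or equal to every entry of the bottom row, append a new column consisting of $a$ at the right end; otherwise, let $z$ be the leftmost bottom-row entry with $z>a$ and put $a$ in a new box at the bottom of the column of $z$ (the previous entries of that column move up one box). For $w=w_1\cdots w_k$, $\mathfrak{R}_\ell(w)$ is obtained by starting with the empty tableau and right-inserting $w_1,\dots,w_k$ in order. The monoid $\mathrm{lps}_n$ is the quotient of $\mathcal{A}_n^*$ by the congruence $u\equiv v\iff\mathfrak{R}_\ell(u)=\mathfrak{R}_\ell(v)$. Finite derivation type is Squier's homotopical finiteness property of finitely presented monoids. *)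

theory Defs
  imports Main
begin

text \<open>An lPS tableau is a list of columns (left to right); each column is a
nonempty list of entries read from bottom to top, so hd c is the bottom entry.\<close>

fun rins :: "nat list list \<Rightarrow> nat \<Rightarrow> nat list list" where
  "rins [] a = [[a]]"
| "rins (c # cs) a = (if a < hd c then (a # c) # cs else c # rins cs a)"

definition Rl :: "nat list \<Rightarrow> nat list list" where
  "Rl w = foldl rins [] w"

definition lps_cong :: "nat \<Rightarrow> nat list \<Rightarrow> nat list \<Rightarrow> bool" where
  "lps_cong n u v = (Rl u = Rl v)"

definition rstep :: "('b list \<times> 'b list) set \<Rightarrow> 'b list \<Rightarrow> 'b list \<Rightarrow> bool" where
  "rstep R x y = (\<exists>u v l r. (l, r) \<in> R \<and> x = u @ l @ v \<and> y = u @ r @ v)"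

definition thue :: "('b list \<times> 'b list) set \<Rightarrow> 'b list \<Rightarrow> 'b list \<Rightarrow> bool" where
  "thue R = (\<lambda>x y. rstep R x y \<or> rstep R y x)\<^sup>*\<^sup>*"

definition hext :: "('b \<Rightarrow> 'c list) \<Rightarrow> 'b list \<Rightarrow> 'c list" where
  "hext f w = concat (map f w)"

text \<open>The monoid presented by (B, R) is isomorphic to the quotient of A* by the
congruence E: there are mutually inverse monoid homomorphisms, given on generators.\<close>
definition presents ::
  "nat set \<Rightarrow> (nat list \<times> nat list) set \<Rightarrow> 'a set \<Rightarrow> ('a list \<Rightarrow> 'a list \<Rightarrow> bool) \<Rightarrow> bool" where
  "presents B R A E = (\<exists>(f :: nat \<Rightarrow> 'a list) (g :: 'a \<Rightarrow> nat list).
      (\<forall>b\<in>B. set (f b) \<subseteq> A) \<and> (\<forall>a\<in>A. set (g a) \<subseteq> B) \<and>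
      (\<forall>u v. set u \<subseteq> B \<longrightarrow> set v \<subseteq> B \<longrightarrow> thue R u v \<longrightarrow> E (hext f u) (hext f v)) \<and>
      (\<forall>u v. set u \<subseteq> A \<longrightarrow> set v \<subseteq> A \<longrightarrow> E u v \<longrightarrow> thue R (hext g u) (hext g v)) \<and>
      (\<forall>w. set w \<subseteq> A \<longrightarrow> E (hext f (hext g w)) w) \<and>
      (\<forall>w. set w \<subseteq> B \<longrightarrow> thue R (hext g (hext f w)) w))"

text \<open>An edge (u, (l, r), b, v) of the derivation graph goes from u l v to u r v
if b, and from u r v to u l v otherwise.\<close>
type_synonym 'b edge = "'b list \<times> ('b list \<times> 'b list) \<times> bool \<times> 'b list"
type_synonym 'b dpath = "'b list \<times> 'b edge list"

fun esrc :: "'b edge \<Rightarrow> 'b list" where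
  "esrc (u, (l, r), b, v) = (if b then u @ l @ v else u @ r @ v)"

fun etgt :: "'b edge \<Rightarrow> 'b list" where
  "etgt (u, (l, r), b, v) = (if b then u @ r @ v else u @ l @ v)"

fun einv :: "'b edge \<Rightarrow> 'b edge" where
  "einv (u, lr, b, v) = (u, lr, \<not> b, v)"

fun ewh :: "'b list \<Rightarrow> 'b list \<Rightarrow> 'b edge \<Rightarrow> 'b edge" where
  "ewh x y (u, lr, b, v) = (x @ u, lr, b, v @ y)"

definition valid_edge :: "('b list \<times> 'b list) set \<Rightarrow> 'b edge \<Rightarrow> bool" where
  "valid_edge R e = (fst (snd e) \<in> R)"

fun ptgt :: "'b list \<Rightarrow> 'b edge list \<Rightarrow> 'b list" where
  "ptgt w [] = w"
| "ptgt w (e # es) = ptgt (etgt e) es"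

fun is_path :: "('b list \<times> 'b list) set \<Rightarrow> 'b list \<Rightarrow> 'b edge list \<Rightarrow> bool" where
  "is_path R w [] = True"
| "is_path R w (e # es) = (valid_edge R e \<and> esrc e = w \<and> is_path R (etgt e) es)"

inductive htpy :: "('b list \<times> 'b list) set \<Rightarrow> ('b dpath \<times> 'b dpath) set
    \<Rightarrow> 'b dpath \<Rightarrow> 'b dpath \<Rightarrow> bool"
  for R :: "('b list \<times> 'b list) set" and X :: "('b dpath \<times> 'b dpath) set" where
  gen: "(p, q) \<in> X \<Longrightarrow> htpy R X p q"
| refl: "is_path R w es \<Longrightarrow> htpy R X (w, es) (w, es)"
| sym: "htpy R X p q \<Longrightarrow> htpy R X q p"
| trans: "htpy R X p q \<Longrightarrow> htpy R X q r \<Longrightarrow> htpy R X p r"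
| ctx: "htpy R X (w, p) (w, q) \<Longrightarrow> is_path R w0 s \<Longrightarrow> ptgt w0 s = w
         \<Longrightarrow> is_path R (ptgt w p) t \<Longrightarrow> htpy R X (w0, s @ p @ t) (w0, s @ q @ t)"
| whisk: "htpy R X (w, p) (w, q) \<Longrightarrow>
          htpy R X (x @ w @ y, map (ewh x y) p) (x @ w @ y, map (ewh x y) q)"
| inv: "valid_edge R e \<Longrightarrow> htpy R X (esrc e, [e, einv e]) (esrc e, [])"
| peiffer: "valid_edge R e1 \<Longrightarrow> valid_edge R e2 \<Longrightarrow>
    htpy R X (esrc e1 @ esrc e2, [ewh [] (esrc e2) e1, ewh (etgt e1) [] e2])
             (esrc e1 @ esrc e2, [ewh (esrc e1) [] e2, ewh [] (etgt e2) e1])"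

definition parallel :: "('b list \<times> 'b list) set \<Rightarrow> 'b dpath \<Rightarrow> 'b dpath \<Rightarrow> bool" where
  "parallel R P Q = (fst P = fst Q \<and> is_path R (fst P) (snd P) \<and> is_path R (fst Q) (snd Q)
                      \<and> ptgt (fst P) (snd P) = ptgt (fst Q) (snd Q))"

definition homotopy_base :: "'b set \<Rightarrow> ('b list \<times> 'b list) set \<Rightarrow> ('b dpath \<times> 'b dpath) set \<Rightarrow> bool" where
  "homotopy_base B R X =
     ((\<forall>(P, Q) \<in> X. parallel R P Q \<and> set (fst P) \<subseteq> B) \<and>
      (\<forall>P Q. set (fst P) \<subseteq> B \<longrightarrow> parallel R P Q \<longrightarrow> htpy R X P Q))"

definition FDT :: "'a set \<Rightarrow> ('a list \<Rightarrow> 'a list \<Rightarrow> bool) \<Rightarrow> bool" where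
  "FDT A E = (\<exists>(B :: nat set) R X. finite B \<and> finite R \<and>
      (\<forall>(l, r) \<in> R. set l \<subseteq> B \<and> set r \<subseteq> B) \<and>
      presents B R A E \<and> finite X \<and> homotopy_base B R X)"

end

theory Submission
  imports Defs "HOL-Library.Countable"
begin

text \<open>Present lps_n by columns, with rules rewriting a pair of columns \<open>c d\<close>, \<open>hd d < hd c\<close>,
to the columns of the tableau of its reading. Rules move entries to the left, so rewriting
terminates; an irreducible word is a tableau, and reading a tableau and inserting it back gives
the same tableau, so the normal form of a word is its tableau and the system is complete. Squier's
theorem then yields finite derivation type: by noetherian induction, any two parallel paths are
homotopic modulo the finitely many branchings on words of bounded length, each closed up by
rewriting to the normal form.\<close>

lemma rstep_append: "rstep R x y \<Longrightarrow> rstep R (p @ x @ q) (p @ y @ q)"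
  unfolding rstep_def by (metis append.assoc)

lemma rtranclp_rstep_append: "(rstep R)\<^sup>*\<^sup>* x y \<Longrightarrow> (rstep R)\<^sup>*\<^sup>* (p @ x @ q) (p @ y @ q)"
  by (induction rule: rtranclp_induct) (auto intro: rtranclp.rtrancl_into_rtrancl rstep_append)

lemma rtranclp_rstep_concat:
  assumes "(rstep R)\<^sup>*\<^sup>* x y" "(rstep R)\<^sup>*\<^sup>* x' y'"
  shows "(rstep R)\<^sup>*\<^sup>* (x @ x') (y @ y')"
proof -
  have "(rstep R)\<^sup>*\<^sup>* ([] @ x @ x') ([] @ y @ x')" by (rule rtranclp_rstep_append[OF assms(1)])
  moreover have "(rstep R)\<^sup>*\<^sup>* (y @ x' @ []) (y @ y' @ [])" by (rule rtranclp_rstep_append[OF assms(2)])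
  ultimately show ?thesis by simp
qed

lemma thue_if_rtranclp: "(rstep R)\<^sup>*\<^sup>* x y \<Longrightarrow> thue R x y"
  unfolding thue_def by (induction rule: rtranclp_induct) (auto intro: rtranclp.rtrancl_into_rtrancl)

lemma thue_sym: "thue R x y \<Longrightarrow> thue R y x"
  unfolding thue_def by (induction rule: rtranclp_induct) (auto intro: converse_rtranclp_into_rtranclp)

lemma thue_trans: "thue R x y \<Longrightarrow> thue R y z \<Longrightarrow> thue R x z"
  unfolding thue_def by (rule rtranclp_trans)

lemma hext_append [simp]: "hext f (u @ v) = hext f u @ hext f v"
  by (simp add: hext_def)

lemma is_path_append [simp]: "is_path R w (p @ q) = (is_path R w p \<and> is_path R (ptgt w p) q)"
  by (induction p arbitrary: w) auto

lemma ptgt_append [simp]: "ptgt w (p @ q) = ptgt (ptgt w p) q"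
  by (induction p arbitrary: w) auto

lemma esrc_einv [simp]: "esrc (einv e) = etgt e"
  and etgt_einv [simp]: "etgt (einv e) = esrc e"
  and valid_edge_einv [simp]: "valid_edge R (einv e) = valid_edge R e"
  by (cases e; auto simp: valid_edge_def)+

abbreviation forward :: "'b edge \<Rightarrow> bool" where
  "forward e \<equiv> fst (snd (snd e))"

lemma forward_einv [simp]: "forward (einv e) = (\<not> forward e)"
  by (cases e) simp

lemma ewh_simps [simp]:
  "esrc (ewh x y e) = x @ esrc e @ y" "etgt (ewh x y e) = x @ etgt e @ y"
  "valid_edge R (ewh x y e) = valid_edge R e" "forward (ewh x y e) = forward e"
  by (cases e; auto simp: valid_edge_def)+

definition path_inv :: "'b edge list \<Rightarrow> 'b edge list" where
  "path_inv p = rev (map einv p)"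

lemma is_path_path_inv:
  "is_path R w p \<Longrightarrow> is_path R (ptgt w p) (path_inv p) \<and> ptgt (ptgt w p) (path_inv p) = w"
  by (induction p arbitrary: w) (auto simp: path_inv_def)

lemma htpy_path_path_inv: "is_path R w p \<Longrightarrow> htpy R X (w, p @ path_inv p) (w, [])"
proof (induction p arbitrary: w)
  case Nil
  then show ?case by (auto simp: path_inv_def intro: htpy.refl)
next
  case (Cons e p)
  have e: "valid_edge R e" "esrc e = w" and p: "is_path R (etgt e) p" using Cons.prems by auto
  have "htpy R X (w, [e] @ (p @ path_inv p) @ [einv e]) (w, [e] @ [] @ [einv e])"
    by (rule htpy.ctx[OF Cons.IH[OF p]]) (use e is_path_path_inv[OF p] in auto)
  moreover have "htpy R X (esrc e, [e, einv e]) (esrc e, [])" by (rule htpy.inv[OF e(1)])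
  ultimately show ?case using e by (simp add: path_inv_def htpy.trans)
qed

definition rpath :: "('b list \<times> 'b list) set \<Rightarrow> 'b list \<Rightarrow> 'b edge list \<Rightarrow> bool" where
  "rpath R w p = (is_path R w p \<and> (\<forall>e\<in>set p. forward e))"

lemma rpath_simps [simp]:
  "rpath R w [] = True"
  "rpath R w (e # p) = (valid_edge R e \<and> esrc e = w \<and> forward e \<and> rpath R (etgt e) p)"
  by (auto simp: rpath_def)

lemma rpath_append [simp]: "rpath R w (p @ q) = (rpath R w p \<and> rpath R (ptgt w p) q)"
  by (auto simp: rpath_def)

lemma rpath_is_path: "rpath R w p \<Longrightarrow> is_path R w p"
  by (simp add: rpath_def)

lemma rpath_whisk:
  "rpath R w p \<Longrightarrow>
    rpath R (x @ w @ y) (map (ewh x y) p) \<and> ptgt (x @ w @ y) (map (ewh x y) p) = x @ ptgt w p @ y"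
  by (induction p arbitrary: w) auto

definition steps_from :: "('b list \<times> 'b list) set \<Rightarrow> 'b list \<Rightarrow> 'b edge set" where
  "steps_from R w = {e. valid_edge R e \<and> forward e \<and> esrc e = w}"

lemma rstep_if_steps_from: "e \<in> steps_from R w \<Longrightarrow> rstep R w (etgt e)"
  by (cases e) (auto simp: steps_from_def valid_edge_def rstep_def; blast)

lemma steps_from_if_rstep: "rstep R x y \<Longrightarrow> \<exists>e \<in> steps_from R x. etgt e = y"
proof -
  assume "rstep R x y"
  then obtain u v l r where "(l, r) \<in> R" "x = u @ l @ v" "y = u @ r @ v" by (auto simp: rstep_def)
  then show ?thesis
    by (intro bexI[of _ "(u, (l, r), True, v)"]) (auto simp: steps_from_def valid_edge_def)
qed

lemma htpy_independent_steps:
  assumes "(l1, s1) \<in> R" "(l2, s2) \<in> R"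
  shows "htpy R X (u @ l1 @ m @ l2 @ v,
      [(u, (l1, s1), True, m @ l2 @ v), (u @ s1 @ m, (l2, s2), True, v)])
     (u @ l1 @ m @ l2 @ v,
      [(u @ l1 @ m, (l2, s2), True, v), (u, (l1, s1), True, m @ s2 @ v)])"
proof -
  have "valid_edge R ([], (l1, s1), True, [])" "valid_edge R (m, (l2, s2), True, [])"
    using assms by (auto simp: valid_edge_def)
  from htpy.whisk[OF htpy.peiffer[OF this], where x=u and y=v] show ?thesis by simp
qed

section \<open>Squier's theorem\<close>

text \<open>Confluence is expressed through the normal form map: \<open>nf\<close> is invariant under rewriting and
fixes irreducible words. The bound \<open>k\<close> on left-hand sides makes every overlap fit into a word
of length at most \<open>2 * k\<close>.\<close>

locale complete_rewriting =
  fixes R :: "('b list \<times> 'b list) set" and B :: "'b set" and k :: nat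
    and weight :: "'b list \<Rightarrow> nat" and nf :: "'b list \<Rightarrow> 'b list"
  assumes finite_rules: "finite R" and finite_gens: "finite B"
    and rules_gens: "(l, r) \<in> R \<Longrightarrow> set l \<subseteq> B \<and> set r \<subseteq> B \<and> length l \<le> k"
    and weight_rstep: "rstep R x y \<Longrightarrow> weight y < weight x"
    and nf_rstep: "rstep R x y \<Longrightarrow> set x \<subseteq> B \<Longrightarrow> nf x = nf y"
    and nf_irreducible: "set x \<subseteq> B \<Longrightarrow> \<forall>y. \<not> rstep R x y \<Longrightarrow> nf x = x"
begin

lemma etgt_gens: "valid_edge R e \<Longrightarrow> set (esrc e) \<subseteq> B \<Longrightarrow> set (etgt e) \<subseteq> B"
  by (cases e) (auto simp: valid_edge_def dest!: rules_gens split: if_splits)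

lemma ptgt_gens: "is_path R w p \<Longrightarrow> set w \<subseteq> B \<Longrightarrow> set (ptgt w p) \<subseteq> B"
  by (induction p arbitrary: w) (auto dest: etgt_gens)

lemma rstep_gens: "rstep R x y \<Longrightarrow> set x \<subseteq> B \<Longrightarrow> set y \<subseteq> B"
  unfolding rstep_def by (auto dest!: rules_gens)

lemma nf_etgt:
  assumes "valid_edge R e" "set (esrc e) \<subseteq> B"
  shows "nf (etgt e) = nf (esrc e)"
proof -
  obtain u l r b v where e: "e = (u, (l, r), b, v)" by (cases e) auto
  have lr: "(l, r) \<in> R" using assms(1) e by (simp add: valid_edge_def)
  have "rstep R (u @ l @ v) (u @ r @ v)" unfolding rstep_def using lr by blast
  moreover have "set (u @ l @ v) \<subseteq> B" using assms(2) rules_gens[OF lr] e by (auto split: if_splits)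
  ultimately show ?thesis using nf_rstep e by auto
qed

lemma nf_ptgt: "is_path R w p \<Longrightarrow> set w \<subseteq> B \<Longrightarrow> nf (ptgt w p) = nf w"
  by (induction p arbitrary: w) (auto simp: nf_etgt etgt_gens)

lemma steps_from_target:
  assumes "e \<in> steps_from R u" "set u \<subseteq> B"
  shows "set (etgt e) \<subseteq> B" "nf (etgt e) = nf u" "weight (etgt e) < weight u"
proof -
  have "valid_edge R e" "esrc e = u" using assms(1) by (auto simp: steps_from_def)
  then show "set (etgt e) \<subseteq> B" "nf (etgt e) = nf u" using etgt_gens nf_etgt assms(2) by auto
  show "weight (etgt e) < weight u" using weight_rstep[OF rstep_if_steps_from[OF assms(1)]] .
qed

lemma rpath_to_nf_exists: "set w \<subseteq> B \<Longrightarrow> \<exists>p. rpath R w p \<and> ptgt w p = nf w"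
proof (induction "weight w" arbitrary: w rule: less_induct)
  case less
  show ?case
  proof (cases "\<exists>y. rstep R w y")
    case True
    then obtain y where y: "rstep R w y" by blast
    then obtain e where e: "e \<in> steps_from R w" "etgt e = y" using steps_from_if_rstep by blast
    obtain p where "rpath R y p" "ptgt y p = nf y"
      using less(1)[OF weight_rstep[OF y] rstep_gens[OF y less(2)]] by blast
    then have "rpath R w (e # p) \<and> ptgt w (e # p) = nf w"
      using e nf_rstep[OF y less(2)] by (simp add: steps_from_def)
    then show ?thesis by blast
  next
    case False
    then have "rpath R w [] \<and> ptgt w [] = nf w" using nf_irreducible[OF less(2)] by simp
    then show ?thesis by blast
  qed
qed

lemma nf_not_rstep: "set w \<subseteq> B \<Longrightarrow> \<not> rstep R (nf w) y"
proof (induction "weight w" arbitrary: w rule: less_induct)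
  case less
  show ?case
  proof (cases "\<exists>z. rstep R w z")
    case True
    then obtain z where z: "rstep R w z" by blast
    have "\<not> rstep R (nf z) y" by (rule less(1)[OF weight_rstep[OF z] rstep_gens[OF z less(2)]])
    then show ?thesis using nf_rstep[OF z less(2)] by simp
  next
    case False
    then show ?thesis using nf_irreducible[OF less(2)] by simp
  qed
qed

lemma rpath_Cons_not_nf:
  assumes "set u \<subseteq> B" "rpath R u (e # p)"
  shows "nf u \<noteq> u"
proof -
  have "e \<in> steps_from R u" using assms(2) by (simp add: steps_from_def)
  then show ?thesis using nf_not_rstep[OF assms(1)] rstep_if_steps_from by metis
qed

definition nf_path :: "'b list \<Rightarrow> 'b edge list" where
  "nf_path w = (SOME p. rpath R w p \<and> ptgt w p = nf w)"

lemma rpath_nf_path: "set w \<subseteq> B \<Longrightarrow> rpath R w (nf_path w)"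
  and ptgt_nf_path: "set w \<subseteq> B \<Longrightarrow> ptgt w (nf_path w) = nf w"
  unfolding nf_path_def using someI_ex[OF rpath_to_nf_exists] by blast+

lemma is_path_nf_path: "set w \<subseteq> B \<Longrightarrow> is_path R w (nf_path w)"
  by (simp add: rpath_is_path rpath_nf_path)

text \<open>Rather than only the critical branchings, all branchings on words of length at most \<open>2 * k\<close>
are used, each closed up by the chosen paths to the normal form; this is still a finite set.\<close>

definition branching_loops :: "('b dpath \<times> 'b dpath) set" where
  "branching_loops = {((w, a1 # nf_path (etgt a1)), (w, a2 # nf_path (etgt a2))) | w a1 a2.
      set w \<subseteq> B \<and> length w \<le> 2 * k \<and> a1 \<in> steps_from R w \<and> a2 \<in> steps_from R w}"

lemma step_nf_path:
  assumes "a \<in> steps_from R w" "set w \<subseteq> B"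
  shows "is_path R w (a # nf_path (etgt a))" "ptgt w (a # nf_path (etgt a)) = nf w"
  using assms steps_from_target[OF assms] is_path_nf_path ptgt_nf_path
  by (auto simp: steps_from_def)

lemma branching_loops_parallel: "(P, Q) \<in> branching_loops \<Longrightarrow> parallel R P Q \<and> set (fst P) \<subseteq> B"
proof -
  assume "(P, Q) \<in> branching_loops"
  then obtain w a1 a2 where "P = (w, a1 # nf_path (etgt a1))" "Q = (w, a2 # nf_path (etgt a2))"
    "set w \<subseteq> B" "a1 \<in> steps_from R w" "a2 \<in> steps_from R w"
    unfolding branching_loops_def by blast
  then show ?thesis unfolding parallel_def using step_nf_path by simp
qed

lemma finite_branching_loops: "finite branching_loops"
proof -
  define W where "W = {w. set w \<subseteq> B \<and> length w \<le> 2 * k}"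
  have "finite W" unfolding W_def by (rule finite_lists_length_le[OF finite_gens])
  have "finite (steps_from R w)" if "w \<in> W" for w
  proof (rule finite_subset)
    show "steps_from R w \<subseteq> W \<times> R \<times> UNIV \<times> W"
    proof
      fix a assume "a \<in> steps_from R w"
      then obtain u l r v where "a = (u, (l, r), True, v)" "(l, r) \<in> R" "u @ l @ v = w"
        by (cases a) (auto simp: steps_from_def valid_edge_def)
      then show "a \<in> W \<times> R \<times> UNIV \<times> W" using that by (auto simp: W_def)
    qed
    show "finite (W \<times> R \<times> (UNIV :: bool set) \<times> W)" using \<open>finite W\<close> finite_rules by simp
  qed
  then have "finite (SIGMA w:W. steps_from R w \<times> steps_from R w)" using \<open>finite W\<close> by blast
  moreover have "branching_loops \<subseteq>
      (\<lambda>(w, a1, a2). ((w, a1 # nf_path (etgt a1)), (w, a2 # nf_path (etgt a2))))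
        ` (SIGMA w:W. steps_from R w \<times> steps_from R w)"
    unfolding branching_loops_def W_def
    by (smt (verit) SigmaI case_prod_conv image_eqI mem_Collect_eq subsetI)
  ultimately show ?thesis by (rule finite_surj)
qed

lemma branching_cases:
  assumes e1: "e1 \<in> steps_from R u" and e2: "e2 \<in> steps_from R u"
    and le: "length (fst e1) \<le> length (fst e2)"
  obtains (independent) u1 l1 s1 m l2 s2 v2 where "(l1, s1) \<in> R" "(l2, s2) \<in> R"
      "e1 = (u1, (l1, s1), True, m @ l2 @ v2)" "e2 = (u1 @ l1 @ m, (l2, s2), True, v2)"
  | (overlap) x w y a1 a2 where "u = x @ w @ y" "length w \<le> 2 * k"
      "a1 \<in> steps_from R w" "a2 \<in> steps_from R w" "e1 = ewh x y a1" "e2 = ewh x y a2"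
proof -
  obtain u1 l1 s1 v1 where E1: "e1 = (u1, (l1, s1), True, v1)" "(l1, s1) \<in> R" "u = u1 @ l1 @ v1"
    using e1 by (cases e1) (auto simp: steps_from_def valid_edge_def)
  obtain u2 l2 s2 v2 where E2: "e2 = (u2, (l2, s2), True, v2)" "(l2, s2) \<in> R" "u = u2 @ l2 @ v2"
    using e2 by (cases e2) (auto simp: steps_from_def valid_edge_def)
  obtain t where t: "u2 = u1 @ t" "l1 @ v1 = t @ l2 @ v2"
  proof -
    have "u1 @ (l1 @ v1) = u2 @ (l2 @ v2)" using E1(3) E2(3) by simp
    then obtain us where "u1 = u2 @ us \<and> us @ l1 @ v1 = l2 @ v2 \<or> u1 @ us = u2 \<and> l1 @ v1 = us @ l2 @ v2"
      unfolding append_eq_append_conv2 by blast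
    moreover have "length u1 \<le> length u2" using le E1 E2 by simp
    ultimately show ?thesis using that[of us] that[of "[]"] by auto
  qed
  obtain us where "l1 @ us = t \<and> v1 = us @ l2 @ v2 \<or> l1 = t @ us \<and> us @ v1 = l2 @ v2"
    using t(2) unfolding append_eq_append_conv2 by blast
  then show ?thesis
  proof (elim disjE conjE)
    assume "l1 @ us = t" "v1 = us @ l2 @ v2"
    then show ?thesis using independent E1 E2 t by simp
  next
    assume lt: "l1 = t @ us" and "us @ v1 = l2 @ v2"
    then obtain ws where "us = l2 @ ws \<and> ws @ v1 = v2 \<or> us @ ws = l2 \<and> v1 = ws @ v2"
      unfolding append_eq_append_conv2 by blast
    then show ?thesis
    proof (elim disjE conjE)
      assume "us = l2 @ ws" "ws @ v1 = v2"
      then show ?thesis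
        using overlap[of u1 l1 v1 "([], (l1, s1), True, [])" "(t, (l2, s2), True, ws)"]
          E1 E2 t lt rules_gens[OF E1(2)] by (simp add: steps_from_def valid_edge_def)
    next
      assume "us @ ws = l2" "v1 = ws @ v2"
      then show ?thesis
        using overlap[of u1 "t @ l2" v2 "([], (l1, s1), True, ws)" "(t, (l2, s2), True, [])"]
          E1 E2 t lt rules_gens[OF E1(2)] rules_gens[OF E2(2)]
        by (simp add: steps_from_def valid_edge_def)
    qed
  qed
qed

lemma overlap_resolution:
  assumes xwy: "set (x @ w @ y) \<subseteq> B" and len: "length w \<le> 2 * k"
    and a1: "a1 \<in> steps_from R w" and a2: "a2 \<in> steps_from R w"
  shows "\<exists>r1 r2. rpath R (etgt (ewh x y a1)) r1 \<and> rpath R (etgt (ewh x y a2)) r2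
    \<and> ptgt (etgt (ewh x y a1)) r1 = ptgt (etgt (ewh x y a2)) r2
    \<and> htpy R branching_loops (x @ w @ y, ewh x y a1 # r1) (x @ w @ y, ewh x y a2 # r2)"
proof -
  have wB: "set w \<subseteq> B" using xwy by simp
  have whisked: "rpath R (etgt (ewh x y a)) (map (ewh x y) (nf_path (etgt a)))
      \<and> ptgt (etgt (ewh x y a)) (map (ewh x y) (nf_path (etgt a))) = x @ nf w @ y"
    if "a \<in> steps_from R w" for a
    using steps_from_target[OF that wB] rpath_whisk[OF rpath_nf_path] ptgt_nf_path by simp
  have "((w, a1 # nf_path (etgt a1)), (w, a2 # nf_path (etgt a2))) \<in> branching_loops"
    unfolding branching_loops_def using wB len a1 a2 by blast
  from htpy.whisk[OF htpy.gen[OF this], where x=x and y=y]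
  have "htpy R branching_loops (x @ w @ y, ewh x y a1 # map (ewh x y) (nf_path (etgt a1)))
      (x @ w @ y, ewh x y a2 # map (ewh x y) (nf_path (etgt a2)))"
    by simp
  then show ?thesis using whisked[OF a1] whisked[OF a2] by (intro exI conjI) auto
qed

lemma branching_resolution:
  assumes uB: "set u \<subseteq> B" and e1: "e1 \<in> steps_from R u" and e2: "e2 \<in> steps_from R u"
  shows "\<exists>r1 r2. rpath R (etgt e1) r1 \<and> rpath R (etgt e2) r2
    \<and> ptgt (etgt e1) r1 = ptgt (etgt e2) r2 \<and> htpy R branching_loops (u, e1 # r1) (u, e2 # r2)"
    (is "?res e1 e2")
proof -
  have ordered: "?res e1 e2" if e1: "e1 \<in> steps_from R u" and e2: "e2 \<in> steps_from R u"
    and le: "length (fst e1) \<le> length (fst e2)" for e1 e2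
    using e1 e2 le
  proof (cases rule: branching_cases)
    case (independent u1 l1 s1 m l2 s2 v2)
    have "u = u1 @ l1 @ m @ l2 @ v2" using e1 independent(3) by (simp add: steps_from_def)
    then show ?thesis
      using htpy_independent_steps[OF independent(1,2), of branching_loops u1 m v2] independent
      by (intro exI[of _ "[(u1 @ s1 @ m, (l2, s2), True, v2)]"]
          exI[of _ "[(u1, (l1, s1), True, m @ s2 @ v2)]"]) (simp add: valid_edge_def)
  next
    case (overlap x w y a1 a2)
    then show ?thesis using overlap_resolution[of x w y a1 a2] uB by simp
  qed
  show ?thesis
  proof (cases "length (fst e1) \<le> length (fst e2)")
    case True
    then show ?thesis using ordered[OF e1 e2] by blast
  next
    case False
    then obtain r1 r2 where "rpath R (etgt e2) r1" "rpath R (etgt e1) r2"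
      "ptgt (etgt e2) r1 = ptgt (etgt e1) r2" "htpy R branching_loops (u, e2 # r1) (u, e1 # r2)"
      using ordered[OF e2 e1] by fastforce
    then show ?thesis by (metis htpy.sym)
  qed
qed

text \<open>Squier's argument: two rewriting paths to the normal form are homotopic, by noetherian
induction on the source, resolving the branching formed by their first steps.\<close>

lemma htpy_rpaths_to_nf:
  "set u \<subseteq> B \<Longrightarrow> rpath R u p \<Longrightarrow> ptgt u p = nf u \<Longrightarrow> rpath R u q \<Longrightarrow> ptgt u q = nf u
   \<Longrightarrow> htpy R branching_loops (u, p) (u, q)"
proof (induction "weight u" arbitrary: u p q rule: less_induct)
  case less
  note uB = less(2)
  show ?case
  proof (cases p)
    case Nil
    then have "nf u = u" using less(4) by simp
    then have "q = []" using rpath_Cons_not_nf[OF uB] less(5) by (metis neq_Nil_conv)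
    then show ?thesis using Nil by (simp add: htpy.refl)
  next
    case p: (Cons e1 p')
    then have "nf u \<noteq> u" using rpath_Cons_not_nf[OF uB] less(3) by blast
    then obtain e2 q' where q: "q = e2 # q'" using less(6) by (metis neq_Nil_conv ptgt.simps(1))
    have e1: "e1 \<in> steps_from R u" using less(3) p by (simp add: steps_from_def)
    have e2: "e2 \<in> steps_from R u" using less(5) q by (simp add: steps_from_def)
    obtain r1 r2 where r: "rpath R (etgt e1) r1" "rpath R (etgt e2) r2"
      "ptgt (etgt e1) r1 = ptgt (etgt e2) r2" "htpy R branching_loops (u, e1 # r1) (u, e2 # r2)"
      using branching_resolution[OF uB e1 e2] by blast
    define z where "z = ptgt (etgt e1) r1"
    note tgt = steps_from_target[OF _ uB]
    have zB: "set z \<subseteq> B" "nf z = nf u"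
      unfolding z_def using ptgt_gens nf_ptgt rpath_is_path[OF r(1)] tgt[OF e1] by auto
    have z: "rpath R z (nf_path z)" "ptgt z (nf_path z) = nf u"
      using rpath_nf_path ptgt_nf_path zB by auto
    have "htpy R branching_loops (etgt e1, p') (etgt e1, r1 @ nf_path z)"
      by (rule less(1)[OF tgt(3)[OF e1] tgt(1)[OF e1]])
        (use less(3,4) p tgt[OF e1] r(1) z z_def in auto)
    from htpy.ctx[OF this, of u "[e1]" "[]"]
    have left: "htpy R branching_loops (u, e1 # p') (u, e1 # r1 @ nf_path z)"
      using e1 by (simp add: steps_from_def)
    have "htpy R branching_loops (etgt e2, q') (etgt e2, r2 @ nf_path z)"
      by (rule less(1)[OF tgt(3)[OF e2] tgt(1)[OF e2]])
        (use less(5,6) q tgt[OF e2] r(2,3) z z_def in auto)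
    from htpy.ctx[OF this, of u "[e2]" "[]"]
    have right: "htpy R branching_loops (u, e2 # q') (u, e2 # r2 @ nf_path z)"
      using e2 by (simp add: steps_from_def)
    from htpy.ctx[OF r(4), of u "[]" "nf_path z"]
    have "htpy R branching_loops (u, e1 # r1 @ nf_path z) (u, e2 # r2 @ nf_path z)"
      using z r(3) z_def by (simp add: rpath_def)
    then show ?thesis unfolding p q by (rule htpy.trans[OF left htpy.trans[OF _ htpy.sym[OF right]]])
  qed
qed

lemma htpy_edge_nf_path:
  assumes e: "valid_edge R e" "esrc e = w" and wB: "set w \<subseteq> B"
  shows "htpy R branching_loops (w, e # nf_path (etgt e)) (w, nf_path w)"
proof -
  have vB: "set (etgt e) \<subseteq> B" and nf_v: "nf (etgt e) = nf w" using etgt_gens nf_etgt e wB by auto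
  have v_path: "rpath R (etgt e) (nf_path (etgt e))" "ptgt (etgt e) (nf_path (etgt e)) = nf w"
    using rpath_nf_path[OF vB] ptgt_nf_path[OF vB] nf_v by auto
  have w_path: "rpath R w (nf_path w)" "ptgt w (nf_path w) = nf w"
    using rpath_nf_path[OF wB] ptgt_nf_path[OF wB] by auto
  show ?thesis
  proof (cases "forward e")
    case True
    show ?thesis by (rule htpy_rpaths_to_nf[OF wB _ _ w_path]) (use True e v_path in simp_all)
  next
    case False
    have "htpy R branching_loops (etgt e, einv e # nf_path w) (etgt e, nf_path (etgt e))"
      by (rule htpy_rpaths_to_nf[OF vB _ _ v_path(1)]) (use False e w_path nf_v v_path in simp_all)
    from htpy.ctx[OF this, of w "[e]" "[]"]
    have detour: "htpy R branching_loops (w, e # einv e # nf_path w) (w, e # nf_path (etgt e))"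
      using e by simp
    from htpy.ctx[OF htpy.inv[OF e(1)], of w "[]" "nf_path w"]
    have cancel: "htpy R branching_loops (w, e # einv e # nf_path w) (w, nf_path w)"
      using e rpath_is_path[OF w_path(1)] by simp
    show ?thesis by (rule htpy.trans[OF htpy.sym[OF detour] cancel])
  qed
qed

lemma htpy_path_nf_path:
  "set w \<subseteq> B \<Longrightarrow> is_path R w p \<Longrightarrow> htpy R branching_loops (w, p @ nf_path (ptgt w p)) (w, nf_path w)"
proof (induction p arbitrary: w)
  case Nil
  then show ?case by (simp add: htpy.refl is_path_nf_path)
next
  case (Cons e p)
  have e: "valid_edge R e" "esrc e = w" and p: "is_path R (etgt e) p" using Cons.prems by auto
  have "set (etgt e) \<subseteq> B" using etgt_gens e Cons.prems by auto
  from htpy.ctx[OF Cons.IH[OF this p], of w "[e]" "[]"]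
  have "htpy R branching_loops (w, e # p @ nf_path (ptgt (etgt e) p)) (w, e # nf_path (etgt e))"
    using e by simp
  then show ?case using htpy.trans htpy_edge_nf_path[OF e Cons.prems(1)] by simp
qed

text \<open>Two parallel paths are both homotopic to the normal form path of the source followed by
the inverse of the normal form path of the target.\<close>

lemma htpy_parallel_paths:
  assumes wB: "set w \<subseteq> B" and p: "is_path R w p" and q: "is_path R w q" and pq: "ptgt w p = ptgt w q"
  shows "htpy R branching_loops (w, p) (w, q)"
proof -
  define t where "t = ptgt w p"
  have tB: "set t \<subseteq> B" and nf_t: "nf t = nf w" unfolding t_def using ptgt_gens nf_ptgt p wB by auto
  have t_path: "is_path R t (nf_path t)" "ptgt t (nf_path t) = nf w"
    using is_path_nf_path ptgt_nf_path tB nf_t by auto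
  have to_t: "htpy R branching_loops (w, r) (w, nf_path w @ path_inv (nf_path t))"
    if r: "is_path R w r" "ptgt w r = t" for r
  proof -
    from htpy.ctx[OF htpy.sym[OF htpy_path_path_inv[OF t_path(1)]] r, of "[]"]
    have "htpy R branching_loops (w, r) (w, r @ nf_path t @ path_inv (nf_path t))" by simp
    moreover from htpy.ctx[OF htpy_path_nf_path[OF wB r(1)], of w "[]" "path_inv (nf_path t)"]
    have "htpy R branching_loops (w, r @ nf_path t @ path_inv (nf_path t))
        (w, nf_path w @ path_inv (nf_path t))"
      using r t_path is_path_path_inv[OF t_path(1)] by simp
    ultimately show ?thesis by (rule htpy.trans)
  qed
  show ?thesis using to_t[OF p] to_t[OF q] pq t_def by (metis htpy.sym htpy.trans)
qed

lemma homotopy_base_branching_loops: "homotopy_base B R branching_loops"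
  unfolding homotopy_base_def
proof (intro conjI allI impI)
  show "\<forall>(P, Q)\<in>branching_loops. parallel R P Q \<and> set (fst P) \<subseteq> B"
    using branching_loops_parallel by blast
next
  fix P Q :: "'b dpath"
  assume "set (fst P) \<subseteq> B" and "parallel R P Q"
  then show "htpy R branching_loops P Q"
    using htpy_parallel_paths by (cases P; cases Q) (auto simp: parallel_def)
qed

end

lemma FDT_if_complete_presentation:
  assumes "complete_rewriting R B k weight nf" and "presents B R A E"
  shows "FDT A E"
proof -
  interpret complete_rewriting R B k weight nf by fact
  have "\<forall>(l, r) \<in> R. set l \<subseteq> B \<and> set r \<subseteq> B" using rules_gens by blast
  then show ?thesis unfolding FDT_def using finite_gens finite_rules assms(2)
      finite_branching_loops homotopy_base_branching_loops by blast
qed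

section \<open>Right insertion\<close>

lemma Rl_append: "Rl (u @ v) = foldl rins (Rl u) v"
  by (simp add: Rl_def)

lemma mem_hd_rins: "a \<in> hd ` set (rins T a)"
  by (induction T) auto

lemma hd_rins_subset: "hd ` set (rins T a) \<subseteq> hd ` set T \<union> {a}"
  by (induction T) auto

lemma sorted_rins: "sorted (map hd T) \<Longrightarrow> sorted (map hd (rins T a))"
proof (induction T)
  case Nil
  then show ?case by simp
next
  case (Cons c T)
  show ?case
  proof (cases "a < hd c")
    case True
    then show ?thesis using Cons.prems by auto
  next
    case False
    have "\<forall>y\<in>hd ` set (rins T a). hd c \<le> y" using hd_rins_subset[of T a] Cons.prems False by auto
    then show ?thesis using Cons False by auto
  qed
qed

lemma sorted_foldl_rins: "sorted (map hd T) \<Longrightarrow> sorted (map hd (foldl rins T w))"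
  by (induction w arbitrary: T) (auto simp: sorted_rins)

lemma sorted_Rl: "sorted (map hd (Rl w))"
  unfolding Rl_def by (rule sorted_foldl_rins) simp

lemma rins_append_le: "\<forall>c\<in>set P. hd c \<le> a \<Longrightarrow> rins (P @ Q) a = P @ rins Q a"
  by (induction P) auto

lemma rins_append_gt: "\<exists>c\<in>set P. a < hd c \<Longrightarrow> rins (P @ Q) a = rins P a @ Q"
  by (induction P) auto

lemma foldl_rins_append_le: "\<forall>c\<in>set P. \<forall>w\<in>set W. hd c \<le> w \<Longrightarrow> foldl rins (P @ Q) W = P @ foldl rins Q W"
proof (induction W arbitrary: Q)
  case Nil then show ?case by simp
next
  case (Cons w W)
  have "rins (P @ Q) w = P @ rins Q w" using Cons.prems by (intro rins_append_le) auto
  then show ?case using Cons by simp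
qed

lemma foldl_rins_append_gt: "sorted_wrt (>) A \<Longrightarrow> (A \<noteq> [] \<Longrightarrow> \<exists>c\<in>set P. hd A < hd c)
   \<Longrightarrow> foldl rins (P @ Q) A = foldl rins P A @ Q"
proof (induction A arbitrary: P)
  case Nil then show ?case by simp
next
  case (Cons a A)
  have 1: "rins (P @ Q) a = rins P a @ Q" using Cons.prems(2) by (intro rins_append_gt) auto
  have 2: "\<exists>c\<in>set (rins P a). hd A < hd c" if "A \<noteq> []"
  proof -
    have "hd A < a" using Cons.prems(1) that by (cases A) auto
    then show ?thesis using mem_hd_rins[of a P] by force
  qed
  show ?case using 1 Cons.IH[of "rins P a"] Cons.prems(1) 2 by simp
qed

lemma hd_foldl_rins_subset: "hd ` set (foldl rins P A) \<subseteq> hd ` set P \<union> set A"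
proof (induction A arbitrary: P)
  case Nil then show ?case by simp
next
  case (Cons a A)
  show ?case using Cons.IH[of "rins P a"] hd_rins_subset[of P a] by auto
qed

lemma hd_mem_takeWhile_le:
  "sorted (map hd T) \<Longrightarrow> z \<in> hd ` set T \<Longrightarrow> \<exists>c\<in>set (takeWhile (\<lambda>c. hd c \<le> z) T). hd c = z"
proof (induction T)
  case Nil then show ?case by simp
next
  case (Cons c T)
  show ?case
  proof (cases "hd c = z")
    case True then show ?thesis by simp
  next
    case False
    then have zT: "z \<in> hd ` set T" using Cons.prems(2) by auto
    have "hd c \<le> z" using Cons.prems zT by auto
    then show ?thesis using Cons zT by auto
  qed
qed

lemma sorted_filter_split: "sorted_wrt (<) d \<Longrightarrow> d = filter (\<lambda>x. x < (z::nat)) d @ filter (\<lambda>x. z \<le> x) d"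
proof (induction d)
  case Nil then show ?case by simp
next
  case (Cons x d)
  show ?case
  proof (cases "x < z")
    case True then show ?thesis using Cons by auto
  next
    case False
    then have "filter (\<lambda>x. x < z) d = []" "filter (\<lambda>x. z \<le> x) d = d" using Cons.prems
      by (auto simp: filter_empty_conv intro!: filter_True)
    then show ?thesis using False by simp
  qed
qed

text \<open>Insertions of entries below \<open>z\<close> only affect the part \<open>P\<close> of the tableau left of the column
with bottom entry \<open>z\<close>, insertions of entries from \<open>z\<close> on only affect the rest \<open>Q\<close>.\<close>

lemma foldl_rins_commute:
  assumes P: "\<forall>c\<in>set P. hd c \<le> z" "\<exists>c\<in>set P. hd c = z"
    and A: "sorted_wrt (>) A" "\<forall>a\<in>set A. a < z" and W: "\<forall>w\<in>set W. z \<le> w"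
  shows "foldl rins (P @ Q) (W @ A) = foldl rins (P @ Q) (A @ W)"
proof -
  have hA: "A \<noteq> [] \<Longrightarrow> \<exists>c\<in>set P. hd A < hd c" using P(2) A(2) by (metis hd_in_set)
  have "foldl rins (P @ Q) W = P @ foldl rins Q W" using P(1) W by (intro foldl_rins_append_le) force
  then have "foldl rins (P @ Q) (W @ A) = foldl rins P A @ foldl rins Q W"
    using foldl_rins_append_gt[OF A(1) hA] by simp
  moreover have "\<forall>c\<in>set (foldl rins P A). \<forall>w\<in>set W. hd c \<le> w"
  proof (intro ballI)
    fix c w assume "c \<in> set (foldl rins P A)" "w \<in> set W"
    then have "hd c \<in> hd ` set P \<union> set A" using hd_foldl_rins_subset[of P A] by auto
    then show "hd c \<le> w" using P(1) A(2) W \<open>w \<in> set W\<close> by fastforce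
  qed
  then have "foldl rins (P @ Q) (A @ W) = foldl rins P A @ foldl rins Q W"
    using foldl_rins_append_le foldl_rins_append_gt[OF A(1) hA] by simp
  ultimately show ?thesis by simp
qed

lemma foldl_rins_column_pair:
  assumes T: "sorted (map hd T)" and c: "c \<noteq> []" and d: "sorted_wrt (<) d"
  shows "foldl rins T (rev c @ rev d)
       = foldl rins T (rev (filter (\<lambda>x. x < hd c) d @ c) @ rev (filter (\<lambda>x. hd c \<le> x) d))"
proof -
  define z where "z = hd c"
  define A where "A = rev (filter (\<lambda>x. x < z) d)"
  define W where "W = rev (filter (\<lambda>x. z \<le> x) d)"
  define T' where "T' = foldl rins T (rev c)"
  define P where "P = takeWhile (\<lambda>c. hd c \<le> z) T'"
  have "rev c = rev (tl c) @ [z]" unfolding z_def using c by (cases c) auto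
  then have "z \<in> hd ` set T'" unfolding T'_def by (simp add: mem_hd_rins)
  then have "\<exists>c\<in>set P. hd c = z"
    using hd_mem_takeWhile_le sorted_foldl_rins[OF T] unfolding P_def T'_def by blast
  moreover have "\<forall>c\<in>set P. hd c \<le> z" unfolding P_def by (auto dest: set_takeWhileD)
  moreover have "sorted_wrt (>) A" unfolding A_def sorted_wrt_rev using sorted_wrt_filter[OF d] by simp
  ultimately have "foldl rins (P @ dropWhile (\<lambda>c. hd c \<le> z) T') (W @ A)
      = foldl rins (P @ dropWhile (\<lambda>c. hd c \<le> z) T') (A @ W)"
    by (intro foldl_rins_commute) (auto simp: A_def W_def)
  moreover have "rev d = W @ A" unfolding A_def W_def
    using sorted_filter_split[OF d, of z] by (metis rev_append)
  ultimately show ?thesis unfolding T'_def P_def z_def A_def W_def by simp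
qed

lemma foldl_rins_column: "\<forall>col\<in>set T. hd col \<le> hd c \<Longrightarrow> c \<noteq> [] \<Longrightarrow> sorted_wrt (<) c
  \<Longrightarrow> foldl rins T (rev c) = T @ [c]"
proof (induction c)
  case Nil then show ?case by simp
next
  case (Cons x c)
  show ?case
  proof (cases "c = []")
    case True
    then show ?thesis using rins_append_le[of T x "[]"] Cons.prems by simp
  next
    case False
    have xc: "x < hd c" using Cons.prems(3) False by (cases c) auto
    have a1: "\<forall>col\<in>set T. hd col \<le> hd c" using Cons.prems(1) xc by force
    have IH: "foldl rins T (rev c) = T @ [c]" using Cons.IH a1 False Cons.prems(3) by simp
    have "rins (T @ [c]) x = T @ rins [c] x" using Cons.prems(1) by (intro rins_append_le) auto
    then show ?thesis using IH xc by simp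
  qed
qed

lemma Rl_reading: "sorted (map hd T) \<Longrightarrow> \<forall>c\<in>set T. c \<noteq> [] \<and> sorted_wrt (<) c
   \<Longrightarrow> Rl (concat (map rev T)) = T"
proof (induction T rule: rev_induct)
  case Nil then show ?case by (simp add: Rl_def)
next
  case (snoc c T)
  have IH: "Rl (concat (map rev T)) = T" using snoc by (simp add: sorted_append)
  have "\<forall>col\<in>set T. hd col \<le> hd c" using snoc.prems(1) by (simp add: sorted_append)
  then show ?case using IH foldl_rins_column snoc.prems(2) by (simp add: Rl_def)
qed

section \<open>A complete column presentation of lps_n\<close>

text \<open>The generators are the columns over \<open>{1..n}\<close>, stored as strictly increasing lists (bottom
entry first); since a presentation has generators in \<open>nat\<close>, column \<open>c\<close> is the generator
\<open>to_nat c\<close>. For \<open>hd d < hd c\<close> the rule rewrites \<open>c d\<close> to the columns of its tableau: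
\<open>c\<close> with the entries of \<open>d\<close> below \<open>hd c\<close> put underneath, then the remaining entries of \<open>d\<close>,
if any.\<close>

definition columns :: "nat \<Rightarrow> nat list set" where
  "columns n = {c. c \<noteq> [] \<and> sorted_wrt (<) c \<and> set c \<subseteq> {1..n}}"

abbreviation col_of :: "nat \<Rightarrow> nat list" where
  "col_of \<equiv> from_nat"

definition col_gens :: "nat \<Rightarrow> nat set" where
  "col_gens n = to_nat ` columns n"

definition col_rhs :: "nat list \<Rightarrow> nat list \<Rightarrow> nat list list" where
  "col_rhs c d = (filter (\<lambda>x. x < hd c) d @ c) #
     (if filter (\<lambda>x. hd c \<le> x) d = [] then [] else [filter (\<lambda>x. hd c \<le> x) d])"

definition col_rules :: "nat \<Rightarrow> (nat list \<times> nat list) set" where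
  "col_rules n = {(map to_nat [c, d], map to_nat (col_rhs c d)) | c d.
      c \<in> columns n \<and> d \<in> columns n \<and> hd d < hd c}"

definition col_word :: "nat \<Rightarrow> nat list" where
  "col_word b = rev (col_of b)"

definition letter_col :: "nat \<Rightarrow> nat list" where
  "letter_col a = [to_nat [a]]"

definition col_nf :: "nat list \<Rightarrow> nat list" where
  "col_nf w = map to_nat (Rl (hext col_word w))"

definition col_size :: "nat list \<Rightarrow> nat" where
  "col_size w = sum_list (map (\<lambda>b. length (col_of b)) w)"

text \<open>Every entry is weighted by the position of its column, counted from the left; rules move
entries to the first of the two columns.\<close>

fun col_weight :: "nat list \<Rightarrow> nat" where
  "col_weight [] = 0"
| "col_weight (b # w) = col_size (b # w) + col_weight w"

lemma singleton_columns: "a \<in> {1..n} \<Longrightarrow> [a] \<in> columns n"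
  by (simp add: columns_def)

lemma hd_le_strict_sorted: "c \<noteq> [] \<Longrightarrow> sorted_wrt (<) c \<Longrightarrow> y \<in> set c \<Longrightarrow> hd c \<le> (y::nat)"
  by (cases c) auto

lemma finite_columns: "finite (columns n)"
proof -
  have "columns n \<subseteq> {xs. set xs \<subseteq> {1..n} \<and> length xs \<le> n}"
  proof
    fix c assume "c \<in> columns n"
    then have c: "sorted_wrt (<) c" "set c \<subseteq> {1..n}" by (auto simp: columns_def)
    have "distinct c" using c(1) by (simp add: strict_sorted_iff)
    then have "length c = card (set c)" by (simp add: distinct_card)
    also have "\<dots> \<le> card {1..n}" using c(2) by (intro card_mono) auto
    finally show "c \<in> {xs. set xs \<subseteq> {1..n} \<and> length xs \<le> n}" using c(2) by simp
  qed
  then show ?thesis using finite_lists_length_le[of "{1..n}" n] finite_subset by auto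
qed

lemma col_rhs_columns: assumes "c \<in> columns n" "d \<in> columns n" shows "set (col_rhs c d) \<subseteq> columns n"
proof -
  have c: "c \<noteq> []" "sorted_wrt (<) c" "set c \<subseteq> {1..n}" and d: "sorted_wrt (<) d" "set d \<subseteq> {1..n}"
    using assms by (auto simp: columns_def)
  have hc: "\<forall>y\<in>set c. hd c \<le> y" using c(1,2) by (cases c) auto
  have 1: "filter (\<lambda>x. x < hd c) d @ c \<in> columns n"
    unfolding columns_def using c d hc
    by (auto simp: sorted_wrt_append sorted_wrt_filter intro: less_le_trans)
  have 2: "filter (\<lambda>x. hd c \<le> x) d \<in> columns n" if "filter (\<lambda>x. hd c \<le> x) d \<noteq> []"
    unfolding columns_def using that d by (auto simp: sorted_wrt_filter)
  show ?thesis unfolding col_rhs_def using 1 2 by auto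
qed

lemma finite_col_rules: "finite (col_rules n)"
proof -
  have "col_rules n \<subseteq>
      (\<lambda>(c, d). (map to_nat [c, d], map to_nat (col_rhs c d))) ` (columns n \<times> columns n)"
    unfolding col_rules_def by auto
  then show ?thesis using finite_columns by (meson finite_SigmaI finite_imageI finite_subset)
qed

lemma col_rules_gens: "(l, r) \<in> col_rules n \<Longrightarrow> set l \<subseteq> col_gens n \<and> set r \<subseteq> col_gens n \<and> length l \<le> 2"
  unfolding col_rules_def col_gens_def using col_rhs_columns by fastforce

lemma Rl_col_rule:
  assumes "c \<in> columns n" "d \<in> columns n" "hd d < hd c"
  shows "Rl (X @ hext col_word (map to_nat [c, d]) @ Y)
       = Rl (X @ hext col_word (map to_nat (col_rhs c d)) @ Y)"
proof -
  have c: "c \<noteq> []" and d: "sorted_wrt (<) d" using assms by (auto simp: columns_def)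
  have l: "hext col_word (map to_nat [c, d]) = rev c @ rev d" by (simp add: hext_def col_word_def)
  have r: "hext col_word (map to_nat (col_rhs c d))
      = rev (filter (\<lambda>x. x < hd c) d @ c) @ rev (filter (\<lambda>x. hd c \<le> x) d)"
    by (simp add: hext_def col_word_def col_rhs_def)
  show ?thesis unfolding l r Rl_append[of X] Rl_append[of "X @ _"] append_assoc[symmetric]
    using foldl_rins_column_pair[OF sorted_Rl c d] by (simp add: Rl_append)
qed

lemma rstep_col_rulesE:
  assumes "rstep (col_rules n) x y"
  obtains u v c d where "x = u @ map to_nat [c, d] @ v" "y = u @ map to_nat (col_rhs c d) @ v"
    "c \<in> columns n" "d \<in> columns n" "hd d < hd c"
  using assms unfolding rstep_def col_rules_def by blast

lemma Rl_col_rstep: "rstep (col_rules n) x y \<Longrightarrow> Rl (hext col_word x) = Rl (hext col_word y)"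
  by (elim rstep_col_rulesE) (simp only: hext_append Rl_col_rule)

lemma col_size_append[simp]: "col_size (u @ v) = col_size u + col_size v" by (simp add: col_size_def)

lemma col_weight_append: "col_weight (x @ v) = col_weight x + length x * col_size v + col_weight v"
  by (induction x) (auto simp: col_size_def)

lemma col_rule_weight:
  assumes "c \<in> columns n" "d \<in> columns n" "hd d < hd c"
  shows "col_weight (map to_nat (col_rhs c d)) < col_weight (map to_nat [c, d])"
    and "col_size (map to_nat (col_rhs c d)) = col_size (map to_nat [c, d])"
    and "length (col_rhs c d) \<le> 2"
proof -
  have d: "d \<noteq> []" using assms by (auto simp: columns_def)
  define F1 where "F1 = filter (\<lambda>x. x < hd c) d"
  define F2 where "F2 = filter (\<lambda>x. hd c \<le> x) d"
  have len: "length F1 + length F2 = length d"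
    unfolding F1_def F2_def using sum_length_filter_compl[of "\<lambda>x. x < hd c" d] by (simp add: not_less)
  have "hd d \<in> set F1" unfolding F1_def using d assms(3) by auto
  then have "length F2 < length d" using len by (cases F1) auto
  then show "col_weight (map to_nat (col_rhs c d)) < col_weight (map to_nat [c, d])"
    and "col_size (map to_nat (col_rhs c d)) = col_size (map to_nat [c, d])"
    and "length (col_rhs c d) \<le> 2"
    using len unfolding col_rhs_def F1_def[symmetric] F2_def[symmetric] by (auto simp: col_size_def)
qed

lemma col_weight_rstep:
  assumes "rstep (col_rules n) x y"
  shows "col_weight y < col_weight x"
proof -
  obtain u v c d where x: "x = u @ map to_nat [c, d] @ v" and y: "y = u @ map to_nat (col_rhs c d) @ v"
    and cd: "c \<in> columns n" "d \<in> columns n" "hd d < hd c"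
    using assms by (rule rstep_col_rulesE)
  define l r where "l = map to_nat [c, d]" and "r = map to_nat (col_rhs c d)"
  have "col_weight r < col_weight l" "col_size r = col_size l" "length r \<le> length l"
    using col_rule_weight[OF cd] by (simp_all add: l_def r_def)
  moreover have "length r * col_size v \<le> length l * col_size v"
    using \<open>length r \<le> length l\<close> by (rule mult_right_mono) simp
  ultimately have "col_weight (r @ v) < col_weight (l @ v)" unfolding col_weight_append by linarith
  moreover have "col_size (r @ v) = col_size (l @ v)" using \<open>col_size r = col_size l\<close> by simp
  ultimately show ?thesis
    unfolding x y l_def[symmetric] r_def[symmetric] col_weight_append[of u] by simp
qed

lemma rstep_col_rule: "c \<in> columns n \<Longrightarrow> d \<in> columns n \<Longrightarrow> hd d < hd c
   \<Longrightarrow> rstep (col_rules n) (map to_nat [c, d]) (map to_nat (col_rhs c d))"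
  unfolding rstep_def col_rules_def by (rule exI[of _ "[]"], rule exI[of _ "[]"]) auto

abbreviation col_rewrites :: "nat \<Rightarrow> nat list \<Rightarrow> nat list \<Rightarrow> bool" where
  "col_rewrites n \<equiv> (rstep (col_rules n))\<^sup>*\<^sup>*"

text \<open>The new box travels from the right end to the first column: the rule for \<open>c (a # c2)\<close>
yields \<open>(a # c) c2\<close>.\<close>

lemma col_bump_rewrites:
  "cs \<noteq> [] \<Longrightarrow> \<forall>c\<in>set cs. c \<in> columns n \<Longrightarrow> sorted (map hd cs) \<Longrightarrow> a < hd (hd cs) \<Longrightarrow> a \<in> {1..n}
   \<Longrightarrow> col_rewrites n (map to_nat cs @ [to_nat [a]]) (to_nat (a # hd cs) # map to_nat (tl cs))"
proof (induction cs)
  case Nil then show ?case by simp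
next
  case (Cons c cs)
  have cc: "c \<in> columns n" using Cons.prems by simp
  show ?case
  proof (cases cs)
    case Nil
    have "rstep (col_rules n) (map to_nat [c, [a]]) (map to_nat (col_rhs c [a]))"
      by (rule rstep_col_rule[OF cc singleton_columns[OF Cons.prems(5)]]) (use Cons.prems in simp)
    moreover have "col_rhs c [a] = [a # c]" using Cons.prems(4) by (simp add: col_rhs_def)
    ultimately show ?thesis using Nil by simp
  next
    case cs: (Cons c2 cs')
    have c2: "c2 \<in> columns n" using Cons.prems cs by simp
    have hc: "hd c \<le> hd c2" using Cons.prems(3) cs by simp
    have ac2: "a # c2 \<in> columns n" using c2 Cons.prems(4,5) hc
      by (auto simp: columns_def dest: hd_le_strict_sorted[of c2])
    have "\<forall>y\<in>set c2. hd c \<le> y" using hc c2 hd_le_strict_sorted[of c2] by (force simp: columns_def)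
    then have "col_rhs c (a # c2) = [a # c, c2]"
      using Cons.prems(4) c2 by (auto simp: col_rhs_def columns_def filter_empty_conv intro: filter_True)
    then have "rstep (col_rules n) [to_nat c, to_nat (a # c2)] [to_nat (a # c), to_nat c2]"
      using rstep_col_rule[OF cc ac2] Cons.prems by simp
    from rstep_append[OF this, of "[]" "map to_nat cs'"]
    have "rstep (col_rules n) (to_nat c # to_nat (a # c2) # map to_nat cs')
        (to_nat (a # c) # to_nat c2 # map to_nat cs')"
      by simp
    moreover have "col_rewrites n (map to_nat cs @ [to_nat [a]]) (to_nat (a # c2) # map to_nat cs')"
      using Cons.IH Cons.prems cs hc by simp
    from rtranclp_rstep_append[OF this, of "[to_nat c]" "[]"]
    have "col_rewrites n (map to_nat (c # cs) @ [to_nat [a]])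
        (to_nat c # to_nat (a # c2) # map to_nat cs')"
      by simp
    ultimately show ?thesis using cs by (simp add: rtranclp.rtrancl_into_rtrancl)
  qed
qed

lemma rins_columns:
  "\<forall>c\<in>set T. c \<in> columns n \<Longrightarrow> a \<in> {1..n} \<Longrightarrow> \<forall>c\<in>set (rins T a). c \<in> columns n"
proof (induction T)
  case Nil then show ?case by (simp add: columns_def)
next
  case (Cons c T)
  have "a # c \<in> columns n" if "a < hd c"
    using Cons.prems that hd_le_strict_sorted[of c] by (force simp: columns_def)
  then show ?case using Cons by auto
qed

lemma Rl_columns: "set u \<subseteq> {1..n} \<Longrightarrow> \<forall>c\<in>set (Rl u). c \<in> columns n"
proof (induction u rule: rev_induct)
  case Nil then show ?case by (simp add: Rl_def)
next
  case (snoc a u)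
  then show ?case using rins_columns[of "Rl u" n a] by (simp add: Rl_append)
qed

lemma rins_rewrites:
  "\<forall>c\<in>set T. c \<in> columns n \<Longrightarrow> sorted (map hd T) \<Longrightarrow> a \<in> {1..n}
   \<Longrightarrow> col_rewrites n (map to_nat T @ [to_nat [a]]) (map to_nat (rins T a))"
proof (induction T)
  case Nil then show ?case by simp
next
  case (Cons c T)
  show ?case
  proof (cases "a < hd c")
    case True
    have "col_rewrites n (map to_nat (c # T) @ [to_nat [a]])
        (to_nat (a # hd (c # T)) # map to_nat (tl (c # T)))"
      by (rule col_bump_rewrites) (use Cons.prems True in auto)
    then show ?thesis using True by simp
  next
    case False
    have "col_rewrites n (map to_nat T @ [to_nat [a]]) (map to_nat (rins T a))"
      using Cons by simp
    from rtranclp_rstep_append[OF this, of "[to_nat c]" "[]"] show ?thesis using False by simp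
  qed
qed

lemma hext_letter_col: "hext letter_col u = map (\<lambda>a. to_nat [a]) u"
  by (induction u) (auto simp: hext_def letter_col_def)

lemma letters_rewrite_Rl: "set u \<subseteq> {1..n} \<Longrightarrow> col_rewrites n (hext letter_col u) (map to_nat (Rl u))"
proof (induction u rule: rev_induct)
  case Nil then show ?case by (simp add: Rl_def hext_def)
next
  case (snoc a u)
  have "col_rewrites n (hext letter_col u @ [to_nat [a]]) (map to_nat (Rl u) @ [to_nat [a]])"
    using rtranclp_rstep_concat[OF snoc.IH] snoc.prems by simp
  moreover have "col_rewrites n (map to_nat (Rl u) @ [to_nat [a]]) (map to_nat (rins (Rl u) a))"
    by (rule rins_rewrites) (use Rl_columns[of u n] snoc.prems sorted_Rl in auto)
  ultimately show ?case by (simp add: hext_letter_col Rl_append)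
qed

lemma irreducible_sorted:
  "set x \<subseteq> col_gens n \<Longrightarrow> \<forall>y. \<not> rstep (col_rules n) x y \<Longrightarrow> sorted (map (\<lambda>b. hd (col_of b)) x)"
proof (induction x)
  case Nil then show ?case by simp
next
  case (Cons a x)
  have "\<not> rstep (col_rules n) x y" for y
    using rstep_append[of "col_rules n" x y "[a]" "[]"] Cons.prems(2) by auto
  then have sx: "sorted (map (\<lambda>b. hd (col_of b)) x)" using Cons.IH Cons.prems(1) by simp
  show ?case
  proof (cases x)
    case Nil then show ?thesis by simp
  next
    case x: (Cons b x')
    obtain c d where cd: "c \<in> columns n" "a = to_nat c" "d \<in> columns n" "b = to_nat d"
      using Cons.prems(1) x by (auto simp: col_gens_def)
    have "\<not> hd d < hd c"
    proof
      assume "hd d < hd c"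
      then have "rstep (col_rules n) ([] @ map to_nat [c, d] @ x') ([] @ map to_nat (col_rhs c d) @ x')"
        by (intro rstep_append rstep_col_rule cd)
      then show False using Cons.prems(2) x cd by simp
    qed
    then show ?thesis using sx x cd by (simp add: not_less, meson order.trans)
  qed
qed

lemma col_nf_irreducible:
  assumes gens: "set x \<subseteq> col_gens n" and irr: "\<forall>y. \<not> rstep (col_rules n) x y"
  shows "col_nf x = x"
proof -
  define T where "T = map col_of x"
  have "\<forall>c\<in>set T. c \<in> columns n" using gens unfolding T_def by (auto simp: col_gens_def)
  moreover have "sorted (map hd T)"
    using irreducible_sorted[OF gens irr] unfolding T_def by (simp add: comp_def)
  ultimately have "Rl (concat (map rev T)) = T" by (intro Rl_reading) (auto simp: columns_def)
  moreover have "hext col_word x = concat (map rev T)"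
    unfolding T_def hext_def col_word_def[abs_def] by (simp add: comp_def)
  moreover have "map to_nat T = x"
    using gens unfolding T_def by (induction x) (auto simp: col_gens_def)
  ultimately show ?thesis unfolding col_nf_def by simp
qed

lemma finite_col_gens: "finite (col_gens n)"
  unfolding col_gens_def using finite_columns by simp

lemma complete_rewriting_col_rules:
  "complete_rewriting (col_rules n) (col_gens n) 2 col_weight col_nf"
proof
  show "finite (col_rules n)" by (rule finite_col_rules)
  show "finite (col_gens n)" by (rule finite_col_gens)
  show "set l \<subseteq> col_gens n \<and> set r \<subseteq> col_gens n \<and> length l \<le> 2" if "(l, r) \<in> col_rules n" for l r
    using col_rules_gens[OF that] .
  show "col_weight y < col_weight x" if "rstep (col_rules n) x y" for x y
    using col_weight_rstep[OF that] .
  show "col_nf x = col_nf y" if "rstep (col_rules n) x y" for x y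
    unfolding col_nf_def using Rl_col_rstep[OF that] by simp
  show "col_nf x = x" if "set x \<subseteq> col_gens n" "\<forall>y. \<not> rstep (col_rules n) x y" for x
    using col_nf_irreducible[OF that] .
qed

lemma Rl_thue: "thue (col_rules n) u v \<Longrightarrow> Rl (hext col_word u) = Rl (hext col_word v)"
  unfolding thue_def by (induction rule: rtranclp_induct) (auto dest: Rl_col_rstep)

lemma col_word_letter_col: "hext col_word (hext letter_col w) = w"
  by (induction w) (auto simp: hext_def col_word_def letter_col_def)

lemma column_letters_rewrite: "c \<in> columns n \<Longrightarrow> col_rewrites n (hext letter_col (rev c)) [to_nat c]"
  using letters_rewrite_Rl[of "rev c" n] Rl_reading[of "[c]"] by (auto simp: columns_def)

lemma letter_col_col_word_rewrites:
  "set w \<subseteq> col_gens n \<Longrightarrow> col_rewrites n (hext letter_col (hext col_word w)) w"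
proof (induction w)
  case Nil then show ?case by (simp add: hext_def)
next
  case (Cons b w)
  obtain c where c: "c \<in> columns n" "b = to_nat c" using Cons.prems by (auto simp: col_gens_def)
  have "hext letter_col (hext col_word (b # w))
      = hext letter_col (rev c) @ hext letter_col (hext col_word w)"
    using c by (simp add: hext_def col_word_def)
  then show ?case
    using rtranclp_rstep_concat[OF column_letters_rewrite[OF c(1)] Cons.IH] Cons.prems c(2) by simp
qed

lemma presents_col_rules: "presents (col_gens n) (col_rules n) {1..n} (lps_cong n)"
  unfolding presents_def
proof (intro exI conjI allI impI ballI)
  show "set (col_word b) \<subseteq> {1..n}" if "b \<in> col_gens n" for b
    using that by (auto simp: col_gens_def col_word_def columns_def)
  show "set (letter_col a) \<subseteq> col_gens n" if "a \<in> {1..n}" for a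
    using singleton_columns[OF that] by (auto simp: col_gens_def letter_col_def)
  show "lps_cong n (hext col_word u) (hext col_word v)" if "thue (col_rules n) u v" for u v
    using Rl_thue[OF that] by (simp add: lps_cong_def)
  show "thue (col_rules n) (hext letter_col u) (hext letter_col v)"
    if "set u \<subseteq> {1..n}" "set v \<subseteq> {1..n}" "lps_cong n u v" for u v
    using thue_if_rtranclp[OF letters_rewrite_Rl[OF that(1)]]
      thue_if_rtranclp[OF letters_rewrite_Rl[OF that(2)]] that(3)
    by (metis lps_cong_def thue_sym thue_trans)
  show "lps_cong n (hext col_word (hext letter_col w)) w" for w
    by (simp add: col_word_letter_col lps_cong_def)
  show "thue (col_rules n) (hext letter_col (hext col_word w)) w" if "set w \<subseteq> col_gens n" for w
    using thue_if_rtranclp[OF letter_col_col_word_rewrites[OF that]] .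
qed

theorem corollary5p7:
  fixes n :: nat
  shows "FDT {1..n} (lps_cong n)"
  using FDT_if_complete_presentation[OF complete_rewriting_col_rules presents_col_rules] .

end
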